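(* Consider an $M\times M$ input-queued switch, $\alpha>0$, $\lambda\in\Lambda$, and $q\in\mathcal I(\alpha)$. For every $(i,j)$ with $\lambda_{ij}>0$ there exists a permutation matrix $\pi$ with $\pi\cdot q^\alpha=\max_{\sigma\in\mathcal S}\sigma\cdot q^\alpha$ and $\pi_{ij}=1$ (powers taken componentwise).
   Context: Input-queued switch: queues indexed by $(i,j)$, $1\le i,j\le M$; schedule set $\mathcal S$ = all $M\times M$ permutation matrices; $x\cdot y=\sum_{ij}x_{ij}y_{ij}$. $\langle\mathcal S\rangle$ convex hull; $\Lambda=\{\lambda\in\mathbb R_+^{M\times M}:\lambda\le\sigma$ componentwise for some $\sigma\in\langle\mathcal S\rangle\}$. $E$ = extreme points of $\{\xi\ge0:\max_\pi\xi\cdot\pi\le1\}$, $\mathcal S^*$ its maximal elements, $\Xi(\lambda)=\{\xi\in\mathcal S^*:\xi\cdot\lambda=1\}$. $L_\alpha(q)=\sum_{ij}q_{ij}^{1+\alpha}/(1+\alpha)$; $\Delta_\alpha(q)$ is the unique minimizer of $L_\alpha(r)$ over $r\ge0$ subject to $\xi\cdot r\ge\xi\cdot q$ for all $\xi\in\Xi(\lambda)$ and $r_{ij}\le q_{ij}$ whenever $\lambda_{ij}=0$; $\mathcal I(\alpha)=\{q\ge0:\Delta_\alpha(q)=q\}$ (invariant states of MW-$\alpha$). *)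

theory Defs
  imports "HOL-Analysis.Analysis"
begin

text \<open>An M x M switch: the index set {1..M} is modelled by a finite type 'n
  (M = CARD('n)); queue / rate / schedule vectors are real matrices real^'n^'n,
  entry (i,j) being  x $ i $ j.\<close>

type_synonym 'n mat = "real^'n^'n"

definition dotm :: "('n::finite) mat \<Rightarrow> 'n mat \<Rightarrow> real" where
  "dotm x y = (\<Sum>i\<in>UNIV. \<Sum>j\<in>UNIV. x $ i $ j * y $ i $ j)"

definition nonneg :: "('n::finite) mat \<Rightarrow> bool" where
  "nonneg x \<longleftrightarrow> (\<forall>i j. 0 \<le> x $ i $ j)"

definition cle :: "('n::finite) mat \<Rightarrow> 'n mat \<Rightarrow> bool" where
  "cle x y \<longleftrightarrow> (\<forall>i j. x $ i $ j \<le> y $ i $ j)"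

definition perm_mat :: "(('n::finite) \<Rightarrow> 'n) \<Rightarrow> 'n mat" where
  "perm_mat p = (\<chi> i j. if p i = j then 1 else 0)"

definition Sched :: "('n::finite) mat set" where
  "Sched = {perm_mat p | p. bij p}"

definition CapReg :: "('n::finite) mat set" where
  "CapReg = {lam. nonneg lam \<and> (\<exists>\<sigma>\<in>convex hull Sched. cle lam \<sigma>)}"

definition DualPoly :: "('n::finite) mat set" where
  "DualPoly = {\<xi>. nonneg \<xi> \<and> Max ((\<lambda>\<pi>. dotm \<xi> \<pi>) ` Sched) \<le> 1}"

definition ExtE :: "('n::finite) mat set" where
  "ExtE = {\<xi>. \<xi> extreme_point_of DualPoly}"

definition SStar :: "('n::finite) mat set" where
  "SStar = {\<xi>\<in>ExtE. \<not> (\<exists>\<eta>\<in>ExtE. cle \<xi> \<eta> \<and> \<eta> \<noteq> \<xi>)}"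

definition Xi :: "('n::finite) mat \<Rightarrow> 'n mat set" where
  "Xi lam = {\<xi>\<in>SStar. dotm \<xi> lam = 1}"

definition L_alpha :: "real \<Rightarrow> ('n::finite) mat \<Rightarrow> real" where
  "L_alpha \<alpha> q = (\<Sum>i\<in>UNIV. \<Sum>j\<in>UNIV. (q $ i $ j) powr (1 + \<alpha>) / (1 + \<alpha>))"

definition Feas :: "('n::finite) mat \<Rightarrow> 'n mat \<Rightarrow> 'n mat set" where
  "Feas lam q = {r. nonneg r \<and> (\<forall>\<xi>\<in>Xi lam. dotm \<xi> r \<ge> dotm \<xi> q)
                 \<and> (\<forall>i j. lam $ i $ j = 0 \<longrightarrow> r $ i $ j \<le> q $ i $ j)}"

definition Delta :: "real \<Rightarrow> ('n::finite) mat \<Rightarrow> 'n mat \<Rightarrow> 'n mat" where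
  "Delta \<alpha> lam q = (THE r. r \<in> Feas lam q \<and> (\<forall>r'\<in>Feas lam q. L_alpha \<alpha> r \<le> L_alpha \<alpha> r'))"

definition Inv :: "real \<Rightarrow> ('n::finite) mat \<Rightarrow> 'n mat set" where
  "Inv \<alpha> lam = {q. nonneg q \<and> Delta \<alpha> lam q = q}"

definition cpow :: "('n::finite) mat \<Rightarrow> real \<Rightarrow> 'n mat" where
  "cpow q \<alpha> = (\<chi> i j. (q $ i $ j) powr \<alpha>)"

end

theory Submission
  imports Defs
begin

(* Since Delta_alpha(q) = q, the state q minimises the strictly convex
   potential L_alpha over the feasible set Feas lam q.  For any schedule pi, a small step
   from q towards lambda - pi (truncated at 0) remains feasible, so first-order
   optimality forces pi . q^alpha <= lambda . q^alpha.  Writing lambda <= sigma with sigma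
   a convex combination of schedules, the chain
     max_pi pi . q^alpha <= lambda . q^alpha <= sigma . q^alpha <= max_pi pi . q^alpha
   is tight, so every schedule in the support of sigma is max-weight; as sigma_ij > 0,
   one of them has a 1 in position (i,j). *)

(* The pairing x . y of the paper is the Euclidean inner product on real^'n^'n;
   working with inner gives bilinearity and continuity for free. *)
lemma dotm_inner: "dotm x y = x \<bullet> y"
  unfolding dotm_def inner_vec_def by simp

(* The one-dimensional potential x^(1+alpha)/(1+alpha), whose derivative is x^alpha;
   L_alpha is its sum over all entries. *)
definition potential :: "real \<Rightarrow> real \<Rightarrow> real" where
  "potential \<alpha> x = x powr (1 + \<alpha>) / (1 + \<alpha>)"

lemma L_alpha_potential: "L_alpha \<alpha> r = (\<Sum>k\<in>UNIV. \<Sum>l\<in>UNIV. potential \<alpha> (r $ k $ l))"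
  unfolding L_alpha_def potential_def ..

(* Strict convexity of the potential on [0,oo), in gradient form: the tangent at y
   lies strictly below the graph away from y.  Proof: z |-> potential z - y^alpha z
   has derivative z^alpha - y^alpha, which is negative left of y and positive right of y. *)
lemma potential_strict_tangent:
  assumes "\<alpha> > 0" "0 \<le> x" "0 \<le> y" "x \<noteq> y"
  shows "potential \<alpha> y + y powr \<alpha> * (x - y) < potential \<alpha> x"
proof -
  define g where "g z = potential \<alpha> z - y powr \<alpha> * z" for z
  have deriv: "(g has_real_derivative z powr \<alpha> - y powr \<alpha>) (at z)" if "0 < z" for z
  proof -
    have "((\<lambda>z. z powr (1 + \<alpha>)) has_real_derivative (1 + \<alpha>) * z powr \<alpha>) (at z)"
      using has_real_derivative_powr[OF that, of "1 + \<alpha>"] by simp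
    then show ?thesis
      unfolding g_def potential_def using assms(1) that
      by (auto intro!: derivative_eq_intros)
  qed
  have cont: "continuous_on {a..b} g" if "0 \<le> a" for a b
    unfolding g_def potential_def using that assms(1)
    by (intro continuous_intros continuous_on_powr') auto
  have "g y < g x"
  proof (cases "y < x")
    case True
    show ?thesis
    proof (rule DERIV_pos_imp_increasing_open[OF True _ cont[OF assms(3)]])
      fix z assume "y < z" "z < x"
      then show "\<exists>D. (g has_real_derivative D) (at z) \<and> D > 0"
        using assms deriv[of z] by (auto intro!: powr_less_mono2)
    qed
  next
    case False
    then have "x < y" using assms(4) by simp
    show ?thesis
    proof (rule DERIV_neg_imp_decreasing_open[OF \<open>x < y\<close> _ cont[OF assms(2)]])
      fix z assume "x < z" "z < y"
      moreover have "z powr \<alpha> < y powr \<alpha>"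
        using \<open>x < z\<close> \<open>z < y\<close> assms by (intro powr_less_mono2) auto
      ultimately show "\<exists>D. (g has_real_derivative D) (at z) \<and> D < 0"
        using assms deriv[of z] by auto
    qed
  qed
  then show ?thesis unfolding g_def by (simp add: algebra_simps)
qed

lemma potential_tangent:
  assumes "\<alpha> > 0" "0 \<le> x" "0 \<le> y"
  shows "potential \<alpha> y + y powr \<alpha> * (x - y) \<le> potential \<alpha> x"
  using potential_strict_tangent[OF assms] by (cases "x = y") auto

lemma L_tangent_gap:
  "L_alpha \<alpha> r - (L_alpha \<alpha> q + cpow q \<alpha> \<bullet> (r - q)) =
   (\<Sum>k\<in>UNIV. \<Sum>l\<in>UNIV. potential \<alpha> (r$k$l)
        - (potential \<alpha> (q$k$l) + (q$k$l) powr \<alpha> * (r$k$l - q$k$l)))"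
  unfolding L_alpha_potential cpow_def inner_vec_def
  by (simp add: sum_subtractf sum.distrib)

lemma L_tangent:
  assumes "\<alpha> > 0" "nonneg q" "nonneg r"
  shows "L_alpha \<alpha> q + cpow q \<alpha> \<bullet> (r - q) \<le> L_alpha \<alpha> r"
proof -
  have "0 \<le> potential \<alpha> (r$k$l) - (potential \<alpha> (q$k$l) + (q$k$l) powr \<alpha> * (r$k$l - q$k$l))"
    for k l using assms potential_tangent unfolding nonneg_def by simp
  then have "0 \<le> L_alpha \<alpha> r - (L_alpha \<alpha> q + cpow q \<alpha> \<bullet> (r - q))"
    unfolding L_tangent_gap by (intro sum_nonneg) auto
  then show ?thesis by simp
qed

lemma L_strict_tangent:
  assumes "\<alpha> > 0" "nonneg q" "nonneg r" "r \<noteq> q"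
  shows "L_alpha \<alpha> q + cpow q \<alpha> \<bullet> (r - q) < L_alpha \<alpha> r"
proof -
  define gap where
    "gap k l = potential \<alpha> (r$k$l) - (potential \<alpha> (q$k$l) + (q$k$l) powr \<alpha> * (r$k$l - q$k$l))"
    for k l
  obtain k0 l0 where "r$k0$l0 \<noteq> q$k0$l0" using assms(4) by (metis vec_eq_iff)
  then have pos: "0 < gap k0 l0"
    using assms potential_strict_tangent unfolding gap_def nonneg_def by simp
  have nn: "0 \<le> gap k l" for k l
    using assms potential_tangent unfolding gap_def nonneg_def by simp
  have "0 < (\<Sum>k\<in>UNIV. \<Sum>l\<in>UNIV. gap k l)"
    using pos nn by (intro sum_pos2[of UNIV k0] sum_pos2[of UNIV l0] sum_nonneg) auto
  then show ?thesis using L_tangent_gap[of \<alpha> r q] unfolding gap_def by simp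
qed

(* Coercivity: a sublevel set of L_alpha within the nonnegative orthant is bounded. *)
lemma potential_le_L:
  assumes "\<alpha> > 0" "nonneg r"
  shows "potential \<alpha> (r$k$l) \<le> L_alpha \<alpha> r"
proof -
  have nn: "0 \<le> potential \<alpha> (r$k'$l')" for k' l'
    using assms unfolding potential_def nonneg_def by simp
  have "potential \<alpha> (r$k$l) \<le> (\<Sum>l'\<in>UNIV. potential \<alpha> (r$k$l'))"
    using nn by (intro member_le_sum) auto
  also have "\<dots> \<le> L_alpha \<alpha> r"
    unfolding L_alpha_potential using nn by (intro member_le_sum sum_nonneg) auto
  finally show ?thesis .
qed

lemma entry_le_L:
  assumes "\<alpha> > 0" "nonneg r"
  shows "r$k$l \<le> max 1 ((1 + \<alpha>) * L_alpha \<alpha> r)"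
proof (cases "r$k$l \<le> 1")
  case False
  then have "r$k$l \<le> r$k$l powr (1 + \<alpha>)"
    using assms(1) powr_mono[of 1 "1 + \<alpha>" "r$k$l"] by simp
  also have "\<dots> = (1 + \<alpha>) * potential \<alpha> (r$k$l)"
    using assms(1) unfolding potential_def by simp
  also have "\<dots> \<le> (1 + \<alpha>) * L_alpha \<alpha> r"
    using assms potential_le_L by simp
  finally show ?thesis by simp
qed simp

lemma continuous_on_L:
  assumes "\<alpha> > 0" "\<forall>r\<in>S. nonneg r"
  shows "continuous_on S (L_alpha \<alpha>)"
  unfolding L_alpha_def[abs_def] using assms unfolding nonneg_def
  by (intro continuous_intros continuous_on_powr') auto

(* L_alpha attains its minimum on every nonempty closed set of nonnegative matrices:
   restrict to the compact part of the set where L_alpha does not exceed its value at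
   a given point. *)
lemma L_attains_min:
  fixes F :: "('n::finite) mat set"
  assumes "\<alpha> > 0" "closed F" "q \<in> F" "\<forall>r\<in>F. nonneg r"
  shows "\<exists>r\<in>F. \<forall>r'\<in>F. L_alpha \<alpha> r \<le> L_alpha \<alpha> r'"
proof -
  define B where "B = max 1 ((1 + \<alpha>) * L_alpha \<alpha> q)"
  define K where "K = F \<inter> {r. \<forall>k l. r$k$l \<le> B}"
  have box: "r \<in> K" if "r \<in> F" "L_alpha \<alpha> r \<le> L_alpha \<alpha> q" for r
  proof -
    have "r$k$l \<le> B" for k l
    proof -
      have "r$k$l \<le> max 1 ((1 + \<alpha>) * L_alpha \<alpha> r)"
        using entry_le_L assms that by blast
      also have "\<dots> \<le> B"
        unfolding B_def using that assms(1) by (intro max.mono mult_left_mono) auto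
      finally show ?thesis .
    qed
    then show ?thesis using that unfolding K_def by auto
  qed
  have "norm r \<le> norm ((\<chi> k l. B) :: 'n mat)" if "r \<in> K" for r
  proof (rule norm_le_componentwise_cart)
    fix k
    show "norm (r$k) \<le> norm (((\<chi> k l. B) :: 'n mat) $ k)"
      using that assms(4) unfolding K_def nonneg_def
      by (intro norm_le_componentwise_cart) (auto intro: order_trans[OF _ abs_ge_self])
  qed
  then have "bounded K" by (auto simp: bounded_iff)
  moreover have "closed K"
    unfolding K_def using assms(2)
    by (intro closed_Int closed_Collect_all closed_Collect_le continuous_intros)
  ultimately have "compact K" by (simp add: compact_eq_bounded_closed)
  moreover have "continuous_on K (L_alpha \<alpha>)"
    using assms(4) unfolding K_def by (intro continuous_on_L[OF assms(1)]) auto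
  moreover have "K \<noteq> {}" using box[OF assms(3)] by auto
  ultimately obtain r0 where r0: "r0 \<in> K" "\<forall>r\<in>K. L_alpha \<alpha> r0 \<le> L_alpha \<alpha> r"
    using continuous_attains_inf by blast
  have "L_alpha \<alpha> r0 \<le> L_alpha \<alpha> r" if "r \<in> F" for r
  proof (cases "r \<in> K")
    case False
    then have "L_alpha \<alpha> q < L_alpha \<alpha> r" using box that by force
    then show ?thesis using r0 box[OF assms(3)] by fastforce
  qed (use r0 in auto)
  then show ?thesis using r0(1) unfolding K_def by auto
qed

(* On a convex set the minimiser is unique: two distinct minimisers a, b would give
   2 L(m) < L(a) + L(b) at their midpoint m, by the strict tangent inequality at m. *)
lemma L_min_unique:
  assumes "\<alpha> > 0" "convex F" "\<forall>r\<in>F. nonneg r"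
    and a: "a \<in> F" "\<forall>r\<in>F. L_alpha \<alpha> a \<le> L_alpha \<alpha> r"
    and b: "b \<in> F" "\<forall>r\<in>F. L_alpha \<alpha> b \<le> L_alpha \<alpha> r"
  shows "a = b"
proof (rule ccontr)
  assume "a \<noteq> b"
  define m where "m = midpoint a b"
  have "m \<in> F" unfolding m_def midpoint_def
    using convexD[OF assms(2) a(1) b(1), of "inverse 2" "inverse 2"] a(1) b(1)
    by (simp add: scaleR_right_distrib)
  have "a \<noteq> m" "b \<noteq> m" using \<open>a \<noteq> b\<close> unfolding m_def
    by (metis midpoint_eq_endpoint)+
  then have "L_alpha \<alpha> m + cpow m \<alpha> \<bullet> (a - m) < L_alpha \<alpha> a"
            "L_alpha \<alpha> m + cpow m \<alpha> \<bullet> (b - m) < L_alpha \<alpha> b"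
    using \<open>m \<in> F\<close> a(1) b(1) assms(3) by (auto intro!: L_strict_tangent[OF assms(1)])
  moreover have "(a - m) + (b - m) = 0" unfolding m_def midpoint_def
    by (simp add: algebra_simps scaleR_2 flip: scaleR_add_left)
  then have "cpow m \<alpha> \<bullet> (a - m) + cpow m \<alpha> \<bullet> (b - m) = 0"
    by (metis inner_add_right inner_zero_right)
  ultimately show False
    using a(2) b(2) \<open>m \<in> F\<close> by fastforce
qed

(* The feasible set of the projection problem is a closed convex set of nonnegative
   matrices containing q, so Delta_alpha is well defined. *)
lemma Feas_nonneg: "r \<in> Feas lam q \<Longrightarrow> nonneg r"
  unfolding Feas_def by simp

lemma Feas_self: "nonneg q \<Longrightarrow> q \<in> Feas lam q"
  unfolding Feas_def by simp

lemma closed_Feas: "closed (Feas lam q)"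
proof -
  have "Feas lam q = {r. \<forall>k l. 0 \<le> r$k$l}
      \<inter> (\<Inter>\<xi>\<in>Xi lam. {r. \<xi> \<bullet> q \<le> \<xi> \<bullet> r})
      \<inter> {r. \<forall>k l. lam$k$l = 0 \<longrightarrow> r$k$l \<le> q$k$l}"
    unfolding Feas_def nonneg_def dotm_inner by auto
  moreover have "closed {r::'a mat. \<forall>k l. lam$k$l = 0 \<longrightarrow> r$k$l \<le> q$k$l}"
  proof -
    have "{r::'a mat. \<forall>k l. lam$k$l = 0 \<longrightarrow> r$k$l \<le> q$k$l}
        = (\<Inter>k. \<Inter>l\<in>{l. lam$k$l = 0}. {r. r$k$l \<le> q$k$l})" by auto
    then show ?thesis by (auto intro!: closed_INT closed_Collect_le continuous_intros)
  qed
  ultimately show ?thesis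
    by (auto intro!: closed_Int closed_INT closed_Collect_all closed_Collect_le
        continuous_intros closed_halfspace_ge)
qed

lemma convex_Feas: "convex (Feas lam q)"
proof (rule convexI)
  fix x y :: "'a mat" and u v :: real
  assume x: "x \<in> Feas lam q" and y: "y \<in> Feas lam q" and uv: "0 \<le> u" "0 \<le> v" "u + v = 1"
  have "\<xi> \<bullet> q \<le> \<xi> \<bullet> (u *\<^sub>R x + v *\<^sub>R y)" if "\<xi> \<in> Xi lam" for \<xi>
  proof -
    have "\<xi> \<bullet> q = u * (\<xi> \<bullet> q) + v * (\<xi> \<bullet> q)" using uv(3) by algebra
    also have "\<dots> \<le> u * (\<xi> \<bullet> x) + v * (\<xi> \<bullet> y)"
      using x y that uv unfolding Feas_def dotm_inner by (intro add_mono mult_left_mono) auto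
    finally show ?thesis by (simp add: inner_add_right)
  qed
  with x y uv show "u *\<^sub>R x + v *\<^sub>R y \<in> Feas lam q"
    unfolding Feas_def nonneg_def dotm_inner by (auto intro: convex_bound_le)
qed

lemma Inv_minimizer:
  assumes "\<alpha> > 0" "q \<in> Inv \<alpha> lam"
  shows "\<forall>r\<in>Feas lam q. L_alpha \<alpha> q \<le> L_alpha \<alpha> r"
proof -
  let ?is_min = "\<lambda>r. r \<in> Feas lam q \<and> (\<forall>r'\<in>Feas lam q. L_alpha \<alpha> r \<le> L_alpha \<alpha> r')"
  have q: "nonneg q" "Delta \<alpha> lam q = q" using assms(2) unfolding Inv_def by auto
  have "\<exists>!r. ?is_min r"
  proof (rule ex_ex1I)
    show "\<exists>r. ?is_min r"
      using L_attains_min[OF assms(1) closed_Feas Feas_self[OF q(1)]] Feas_nonneg by blast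
  next
    show "a = b" if "?is_min a" "?is_min b" for a b
      using L_min_unique[OF assms(1) convex_Feas] Feas_nonneg that by blast
  qed
  then have "?is_min (Delta \<alpha> lam q)" unfolding Delta_def by (rule theI')
  then show ?thesis using q(2) by simp
qed

lemma finite_Sched: "finite (Sched :: ('n::finite) mat set)"
proof -
  have "Sched = perm_mat ` {p::'n \<Rightarrow> 'n. bij p}" unfolding Sched_def by auto
  then show ?thesis by (metis finite finite_imageI)
qed

lemma Sched_nonempty: "Sched \<noteq> {}"
  unfolding Sched_def by auto

lemma Sched_entry: "\<pi> \<in> Sched \<Longrightarrow> \<pi>$k$l = 0 \<or> \<pi>$k$l = 1"
  unfolding Sched_def perm_mat_def by auto

lemma Xi_dual:
  assumes "\<xi> \<in> Xi lam" "\<pi> \<in> Sched"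
  shows "nonneg \<xi>" "\<xi> \<bullet> \<pi> \<le> 1" "\<xi> \<bullet> lam = 1"
proof -
  have "\<xi> \<in> DualPoly"
    using assms(1) unfolding Xi_def SStar_def ExtE_def extreme_point_of_def by auto
  then show "nonneg \<xi>" unfolding DualPoly_def by auto
  have "dotm \<xi> \<pi> \<le> Max ((\<lambda>\<pi>. dotm \<xi> \<pi>) ` Sched)"
    using finite_Sched assms(2) by (intro Max_ge) auto
  also have "\<dots> \<le> 1" using \<open>\<xi> \<in> DualPoly\<close> unfolding DualPoly_def by auto
  finally show "\<xi> \<bullet> \<pi> \<le> 1" by (simp add: dotm_inner)
  show "\<xi> \<bullet> lam = 1" using assms(1) unfolding Xi_def dotm_inner by auto
qed

(* Componentwise positive part, used to keep perturbed queue states nonnegative. *)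
definition pos_part :: "('n::finite) mat \<Rightarrow> 'n mat" where
  "pos_part x = (\<chi> k l. max (x$k$l) 0)"

lemma inner_pos_part_ge:
  assumes "nonneg \<xi>"
  shows "\<xi> \<bullet> x \<le> \<xi> \<bullet> pos_part x"
  using assms unfolding nonneg_def pos_part_def inner_vec_def
  by (auto intro!: sum_mono mult_left_mono)

(* Moving from q towards lambda - pi for a schedule pi (and truncating at 0) stays
   feasible: every xi in Xi(lambda) has xi . lambda = 1 >= xi . pi, and entries with
   lambda_kl = 0 can only decrease. *)
lemma step_Feas:
  assumes "nonneg q" "\<pi> \<in> Sched" "0 \<le> \<epsilon>"
  shows "pos_part (q + \<epsilon> *\<^sub>R (lam - \<pi>)) \<in> Feas lam q"
  unfolding Feas_def dotm_inner
proof (intro CollectI conjI allI ballI impI)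
  show "nonneg (pos_part (q + \<epsilon> *\<^sub>R (lam - \<pi>)))"
    unfolding nonneg_def pos_part_def by simp
next
  fix k l assume "lam$k$l = 0"
  moreover have "0 \<le> \<pi>$k$l" "0 \<le> q$k$l"
    using Sched_entry[OF assms(2), of k l] assms(1) unfolding nonneg_def by auto
  ultimately show "pos_part (q + \<epsilon> *\<^sub>R (lam - \<pi>)) $k$l \<le> q$k$l"
    using assms(3) unfolding pos_part_def by (simp add: mult_nonneg_nonneg)
next
  fix \<xi> assume \<xi>: "\<xi> \<in> Xi lam"
  have "\<xi> \<bullet> q \<le> \<xi> \<bullet> q + \<epsilon> * (\<xi> \<bullet> lam - \<xi> \<bullet> \<pi>)"
    using Xi_dual[OF \<xi> assms(2)] assms(3) by simp
  also have "\<dots> = \<xi> \<bullet> (q + \<epsilon> *\<^sub>R (lam - \<pi>))"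
    by (simp add: inner_add_right inner_diff_right)
  also have "\<dots> \<le> \<xi> \<bullet> pos_part (q + \<epsilon> *\<^sub>R (lam - \<pi>))"
    using Xi_dual(1)[OF \<xi> assms(2)] by (rule inner_pos_part_ge)
  finally show "\<xi> \<bullet> q \<le> \<xi> \<bullet> pos_part (q + \<epsilon> *\<^sub>R (lam - \<pi>))" .
qed

(* By the tangent inequality at the new
   point r, L(r) - L(q) <= eps * (d . r^alpha), and r^alpha -> q^alpha as eps -> 0+. *)
lemma pos_part_step_entry:
  fixes a b \<epsilon> \<alpha> :: real
  assumes "0 \<le> a"
  shows "(max (a + \<epsilon> * b) 0) powr \<alpha> * (max (a + \<epsilon> * b) 0 - a)
         = \<epsilon> * (b * (max (a + \<epsilon> * b) 0) powr \<alpha>)"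
  using assms by (cases "0 \<le> a + \<epsilon> * b") (simp_all add: max_def mult_ac)

lemma L_descent:
  assumes "\<alpha> > 0" "nonneg q" "d \<bullet> cpow q \<alpha> < 0"
  shows "\<exists>\<epsilon>>0. L_alpha \<alpha> (pos_part (q + \<epsilon> *\<^sub>R d)) < L_alpha \<alpha> q"
proof -
  define r where "r \<epsilon> = pos_part (q + \<epsilon> *\<^sub>R d)" for \<epsilon>
  have r_nonneg: "nonneg (r \<epsilon>)" for \<epsilon>
    unfolding r_def pos_part_def nonneg_def by simp
  have gain: "L_alpha \<alpha> (r \<epsilon>) - L_alpha \<alpha> q \<le> \<epsilon> * (d \<bullet> cpow (r \<epsilon>) \<alpha>)" for \<epsilon>
  proof -
    have "cpow (r \<epsilon>) \<alpha> \<bullet> (r \<epsilon> - q) = \<epsilon> * (d \<bullet> cpow (r \<epsilon>) \<alpha>)"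
      using assms(2) unfolding r_def pos_part_def cpow_def inner_vec_def nonneg_def
      by (simp add: pos_part_step_entry sum_distrib_left)
    moreover have "L_alpha \<alpha> (r \<epsilon>) + cpow (r \<epsilon>) \<alpha> \<bullet> (q - r \<epsilon>) \<le> L_alpha \<alpha> q"
      using L_tangent[OF assms(1) r_nonneg assms(2)] .
    moreover have "cpow (r \<epsilon>) \<alpha> \<bullet> (q - r \<epsilon>) = - (cpow (r \<epsilon>) \<alpha> \<bullet> (r \<epsilon> - q))"
      by (simp add: inner_diff_right)
    ultimately show ?thesis by linarith
  qed
  have "r 0 = q"
    using assms(2) unfolding r_def pos_part_def nonneg_def by (simp add: vec_eq_iff)
  moreover have "((\<lambda>\<epsilon>. d \<bullet> cpow (r \<epsilon>) \<alpha>) \<longlongrightarrow> d \<bullet> cpow (r 0) \<alpha>) (at_right 0)"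
    unfolding r_def pos_part_def cpow_def using assms(1)
    by (intro tendsto_intros tendsto_powr') auto
  ultimately have "\<forall>\<^sub>F \<epsilon> in at_right 0. d \<bullet> cpow (r \<epsilon>) \<alpha> < 0"
    using assms(3) by (auto dest: order_tendstoD(2))
  moreover have "\<forall>\<^sub>F \<epsilon> in at_right (0::real). 0 < \<epsilon>"
    by (simp add: eventually_at_right_less)
  ultimately obtain \<epsilon> where "0 < \<epsilon>" "d \<bullet> cpow (r \<epsilon>) \<alpha> < 0"
    using eventually_happens'[OF trivial_limit_at_right_real eventually_conj] by blast
  then have "L_alpha \<alpha> (r \<epsilon>) < L_alpha \<alpha> q"
    using gain[of \<epsilon>] mult_pos_neg by fastforce
  with \<open>0 < \<epsilon>\<close> show ?thesis unfolding r_def by blast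
qed

lemma Inv_lam_max_weight:
  assumes "\<alpha> > 0" "q \<in> Inv \<alpha> lam" "\<pi> \<in> Sched"
  shows "\<pi> \<bullet> cpow q \<alpha> \<le> lam \<bullet> cpow q \<alpha>"
proof (rule ccontr)
  assume "\<not> ?thesis"
  then have "(lam - \<pi>) \<bullet> cpow q \<alpha> < 0" by (simp add: inner_diff_left)
  moreover have q: "nonneg q" using assms(2) unfolding Inv_def by simp
  ultimately obtain \<epsilon> where \<epsilon>: "0 < \<epsilon>"
    and less: "L_alpha \<alpha> (pos_part (q + \<epsilon> *\<^sub>R (lam - \<pi>))) < L_alpha \<alpha> q"
    using L_descent[OF assms(1)] by blast
  have "pos_part (q + \<epsilon> *\<^sub>R (lam - \<pi>)) \<in> Feas lam q"
    using step_Feas[OF q assms(3)] \<epsilon> by simp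
  with less Inv_minimizer[OF assms(1,2)] show False by fastforce
qed

lemma max_weight_support:
  fixes lam w :: "('n::finite) mat"
  assumes "lam \<in> CapReg" "nonneg w" "\<forall>\<pi>\<in>Sched. \<pi> \<bullet> w \<le> lam \<bullet> w" "lam$i$j > 0"
  shows "\<exists>\<pi>\<in>Sched. \<pi> \<bullet> w = Max ((\<lambda>\<sigma>. \<sigma> \<bullet> w) ` Sched) \<and> \<pi>$i$j = 1"
proof -
  define W where "W = Max ((\<lambda>\<sigma>. \<sigma> \<bullet> w) ` Sched)"
  have W_ge: "\<pi> \<bullet> w \<le> W" if "\<pi> \<in> Sched" for \<pi>
    unfolding W_def using finite_Sched that by (intro Max_ge) auto
  have "W \<in> (\<lambda>\<sigma>. \<sigma> \<bullet> w) ` Sched"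
    unfolding W_def using finite_Sched Sched_nonempty by (intro Max_in) auto
  then have W_le: "W \<le> lam \<bullet> w" using assms(3) by auto
  obtain \<sigma> where \<sigma>: "\<sigma> \<in> convex hull Sched" "cle lam \<sigma>"
    using assms(1) unfolding CapReg_def by auto
  then obtain u where u: "\<forall>\<pi>\<in>Sched. 0 \<le> u \<pi>" "sum u Sched = 1" "(\<Sum>\<pi>\<in>Sched. u \<pi> *\<^sub>R \<pi>) = \<sigma>"
    unfolding convex_hull_finite[OF finite_Sched] by auto
  have "lam \<bullet> w \<le> \<sigma> \<bullet> w"
    using \<sigma>(2) assms(2) unfolding cle_def nonneg_def inner_vec_def
    by (auto intro!: sum_mono mult_right_mono)
  also have "\<sigma> \<bullet> w = (\<Sum>\<pi>\<in>Sched. u \<pi> * (\<pi> \<bullet> w))"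
    using u(3) by (auto simp: inner_sum_left)
  finally have "(\<Sum>\<pi>\<in>Sched. u \<pi> * (W - \<pi> \<bullet> w)) \<le> 0"
    using W_le u(2) by (simp add: right_diff_distrib sum_subtractf flip: sum_distrib_right)
  moreover have "\<forall>\<pi>\<in>Sched. 0 \<le> u \<pi> * (W - \<pi> \<bullet> w)"
    using u(1) W_ge by simp
  ultimately have tight: "\<forall>\<pi>\<in>Sched. u \<pi> * (W - \<pi> \<bullet> w) = 0"
    using sum_nonneg_eq_0_iff[OF finite_Sched] by (metis (no_types, lifting) order_antisym sum_nonneg)
  have "0 < \<sigma>$i$j" using \<sigma>(2) assms(4) unfolding cle_def by (meson less_le_trans)
  also have "\<sigma>$i$j = (\<Sum>\<pi>\<in>Sched. u \<pi> * \<pi>$i$j)"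
    using u(3) by (auto simp: sum_component)
  finally obtain \<pi> where "\<pi> \<in> Sched" "u \<pi> \<noteq> 0" "\<pi>$i$j \<noteq> 0"
    by (metis (no_types, lifting) mult_eq_0_iff sum.neutral less_irrefl)
  with tight Sched_entry show ?thesis unfolding W_def by fastforce
qed

theorem lemmaA3:
  fixes lam q :: "('n::finite) mat" and \<alpha> :: real and i j :: 'n
  assumes "\<alpha> > 0"
    and "lam \<in> CapReg"
    and "q \<in> Inv \<alpha> lam"
    and "lam $ i $ j > 0"
  shows "\<exists>\<pi>\<in>Sched. dotm \<pi> (cpow q \<alpha>) = Max ((\<lambda>\<sigma>. dotm \<sigma> (cpow q \<alpha>)) ` Sched)
                    \<and> \<pi> $ i $ j = 1"
proof -
  have "nonneg (cpow q \<alpha>)" unfolding nonneg_def cpow_def by simp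
  moreover have "\<forall>\<pi>\<in>Sched. \<pi> \<bullet> cpow q \<alpha> \<le> lam \<bullet> cpow q \<alpha>"
    using Inv_lam_max_weight[OF assms(1,3)] by blast
  ultimately show ?thesis
    unfolding dotm_inner using max_weight_support[OF assms(2) _ _ assms(4)] by blast
qed

end
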